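(* Fix $x,y\in Y_{G,b,P_\delta}$, $(u_x,v_x)\in[Q_x]$, $(u_y,v_y)\in[Q_y]$ and $w\in\Delta P$ (identified with an element of $P$), and write $$s^{-1}(u_xxv_x^{-1})\,s^{-1}(wu_yyv_y^{-1}w^{-1})=\sum_{\substack{z\in Z\\(u'_z,v'_z)\in A_z}}\alpha_z\,s^{-1}(u'_zz(v'_z)^{-1})$$ with $Z\subseteq Y_{G,b,P_\delta}$, $A_z\subseteq P\times P$, $\alpha_z\in k$. Let $W'=Q_{u_x,v_x}\cap Q_{wu_y,wv_y,y}$. Then for all $[f],[g]\in\mathrm{H}^*(W',k)$, $$\theta^*_{u_x,v_x,x}([f])\cup\theta^*_{wu_y,wv_y,y}([g])=\sum_{\substack{z\in Z\\(u'_z,v'_z)\in A_z}}\alpha_z\,\theta^*_{u'_z,v'_z,z}([f]\cup[g]).$$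
   Context: $G$ is a finite group, $k$ an algebraically closed field of characteristic $p$, $b$ a block idempotent of $kG$ with defect pointed group $P_\delta$, $i\in\delta$ a source idempotent; the source algebra $ikGi$ is a $k[P\times P]$-module via $(u,v)\cdot m=umv^{-1}$ and a $k\Delta P$-module by restriction to $\Delta P=\{(w,w)\mid w\in P\}$; cohomology with coefficients in $ikGi$ carries the cup product with respect to the multiplication of $ikGi$. Conjugation: ${}^xa=xax^{-1}$, $a^x=x^{-1}ax$. $Y_{G,b,P_\delta}$ is a subset of a system of representatives of $P\backslash G/P$ with a fixed isomorphism of $k[P\times P]$-modules $s:ikGi\to\bigoplus_{x\in Y_{G,b,P_\delta}}k[PxP]$. $Q_x:=\{(a,a^x)\mid a\in P\cap{}^xP\}$, $Q_{u,v,x}:=\Delta P\cap{}^{(u,v)}Q_x$; $[Q_x]$ is a fixed system of representatives of $\Delta P\backslash(P\times P)/Q_x$ and $Q_{u_x,v_x}:=Q_{u_x,v_x,x}$. $\theta_{u,v,x}:k\to ikGi$, $\alpha\mapsto\alpha s^{-1}(uxv^{-1})$, is a $kW$-module map for subgroups $W$ fixing $s^{-1}(uxv^{-1})$ (in particular for $W\le Q_{u,v,x}$), and $\theta^*_{u,v,x}:\mathrm{H}^*(W,k)\to\mathrm{H}^*(W,ikGi)$ is the induced map. *)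

theory Defs
  imports "HOL-Algebra.Group" "HOL-Computational_Algebra.Polynomial" "HOL-Library.Function_Algebras"
begin

definition alg_closed :: "'k::field itself \<Rightarrow> bool" where
  "alg_closed _ \<longleftrightarrow> (\<forall>q :: 'k poly. degree q > 0 \<longrightarrow> (\<exists>x. poly q x = 0))"

text \<open>Elements of kG are functions carrier G to k, extended by 0 outside the carrier.\<close>

definition galg :: "('g, 'b) monoid_scheme \<Rightarrow> ('g \<Rightarrow> 'k::field) set" where
  "galg G = {a. \<forall>g. g \<notin> carrier G \<longrightarrow> a g = 0}"

definition gmult :: "('g, 'b) monoid_scheme \<Rightarrow> ('g \<Rightarrow> 'k::field) \<Rightarrow> ('g \<Rightarrow> 'k) \<Rightarrow> ('g \<Rightarrow> 'k)" where
  "gmult G a c = (\<lambda>g. if g \<in> carrier G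
      then (\<Sum>h\<in>carrier G. a h * c (inv\<^bsub>G\<^esub> h \<otimes>\<^bsub>G\<^esub> g)) else 0)"

definition gbasis :: "'g \<Rightarrow> ('g \<Rightarrow> 'k::field)" where
  "gbasis g = (\<lambda>h. if h = g then 1 else 0)"

definition gcentre :: "('g, 'b) monoid_scheme \<Rightarrow> ('g \<Rightarrow> 'k::field) set" where
  "gcentre G = {a \<in> galg G. \<forall>c \<in> galg G. gmult G a c = gmult G c a}"

definition gfix :: "('g, 'b) monoid_scheme \<Rightarrow> 'g set \<Rightarrow> ('g \<Rightarrow> 'k::field) set" where
  "gfix G P = {a \<in> galg G. \<forall>u \<in> P. gmult G (gbasis u) a = gmult G a (gbasis u)}"

definition prim_idem :: "('g, 'b) monoid_scheme \<Rightarrow> ('g \<Rightarrow> 'k::field) set \<Rightarrow> ('g \<Rightarrow> 'k) \<Rightarrow> bool" where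
  "prim_idem G B e \<longleftrightarrow> e \<in> B \<and> e \<noteq> 0 \<and> gmult G e e = e \<and>
     (\<forall>e1 \<in> B. \<forall>e2 \<in> B. gmult G e1 e1 = e1 \<and> gmult G e2 e2 = e2 \<and>
        gmult G e1 e2 = 0 \<and> gmult G e2 e1 = 0 \<and> e = e1 + e2 \<longrightarrow> e1 = 0 \<or> e2 = 0)"

definition block_idem :: "('g, 'b) monoid_scheme \<Rightarrow> ('g \<Rightarrow> 'k::field) \<Rightarrow> bool" where
  "block_idem G b \<longleftrightarrow> prim_idem G (gcentre G) b"

definition centralizer_set :: "('g, 'b) monoid_scheme \<Rightarrow> 'g set \<Rightarrow> 'g set" where
  "centralizer_set G Q = {g \<in> carrier G. \<forall>u \<in> Q. g \<otimes>\<^bsub>G\<^esub> u = u \<otimes>\<^bsub>G\<^esub> g}"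

definition brauer :: "('g, 'b) monoid_scheme \<Rightarrow> 'g set \<Rightarrow> ('g \<Rightarrow> 'k::field) \<Rightarrow> ('g \<Rightarrow> 'k)" where
  "brauer G Q a = (\<lambda>g. if g \<in> centralizer_set G Q then a g else 0)"

definition p_subgroup :: "nat \<Rightarrow> 'g set \<Rightarrow> ('g, 'b) monoid_scheme \<Rightarrow> bool" where
  "p_subgroup p Q G \<longleftrightarrow> subgroup Q G \<and> (\<exists>n. card Q = p ^ n)"

definition defect_group :: "nat \<Rightarrow> ('g, 'b) monoid_scheme \<Rightarrow> ('g \<Rightarrow> 'k::field) \<Rightarrow> 'g set \<Rightarrow> bool" where
  "defect_group p G b P \<longleftrightarrow> p_subgroup p P G \<and> brauer G P b \<noteq> 0 \<and>
     (\<forall>Q. p_subgroup p Q G \<and> P \<subseteq> Q \<and> brauer G Q b \<noteq> 0 \<longrightarrow> Q = P)"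

text \<open>i is a source idempotent of b relative to the defect group P: i lies in a local
  point delta of P on kGb, i.e. i is primitive in (kGb)^P and Br_P(i) is nonzero
  (then P_delta is a defect pointed group of b).\<close>
definition source_idem :: "nat \<Rightarrow> ('g, 'b) monoid_scheme \<Rightarrow> ('g \<Rightarrow> 'k::field) \<Rightarrow> 'g set \<Rightarrow> ('g \<Rightarrow> 'k) \<Rightarrow> bool" where
  "source_idem p G b P i \<longleftrightarrow> defect_group p G b P \<and>
     prim_idem G {a \<in> gfix G P. gmult G a b = a} i \<and> brauer G P i \<noteq> 0"

definition source_alg :: "('g, 'b) monoid_scheme \<Rightarrow> ('g \<Rightarrow> 'k::field) \<Rightarrow> ('g \<Rightarrow> 'k) set" where
  "source_alg G i = {gmult G (gmult G i a) i | a. a \<in> galg G}"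

definition bimod_act :: "('g, 'b) monoid_scheme \<Rightarrow> 'g \<Rightarrow> 'g \<Rightarrow> ('g \<Rightarrow> 'k::field) \<Rightarrow> ('g \<Rightarrow> 'k)" where
  "bimod_act G u v m = gmult G (gmult G (gbasis u) m) (gbasis (inv\<^bsub>G\<^esub> v))"

definition dcoset :: "('g, 'b) monoid_scheme \<Rightarrow> 'g set \<Rightarrow> 'g \<Rightarrow> 'g set" where
  "dcoset G P x = {u \<otimes>\<^bsub>G\<^esub> x \<otimes>\<^bsub>G\<^esub> v | u v. u \<in> P \<and> v \<in> P}"

definition dcoset_reps_subset :: "('g, 'b) monoid_scheme \<Rightarrow> 'g set \<Rightarrow> 'g set \<Rightarrow> bool" where
  "dcoset_reps_subset G P Y \<longleftrightarrow> Y \<subseteq> carrier G \<and>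
     (\<forall>x \<in> Y. \<forall>y \<in> Y. dcoset G P x = dcoset G P y \<longrightarrow> x = y)"

text \<open>The permutation module (direct sum over x in Y of k[PxP]) realised inside kG.\<close>
definition perm_mod :: "('g, 'b) monoid_scheme \<Rightarrow> 'g set \<Rightarrow> 'g set \<Rightarrow> ('g \<Rightarrow> 'k::field) set" where
  "perm_mod G P Y = {f. \<forall>g. f g \<noteq> 0 \<longrightarrow> g \<in> (\<Union>x\<in>Y. dcoset G P x)}"

definition source_iso ::
  "('g, 'b) monoid_scheme \<Rightarrow> 'g set \<Rightarrow> ('g \<Rightarrow> 'k::field) \<Rightarrow> 'g set \<Rightarrow> (('g \<Rightarrow> 'k) \<Rightarrow> ('g \<Rightarrow> 'k)) \<Rightarrow> bool" where
  "source_iso G P i Y s \<longleftrightarrow> bij_betw s (source_alg G i) (perm_mod G P Y) \<and>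
     (\<forall>m \<in> source_alg G i. \<forall>m' \<in> source_alg G i. s (m + m') = s m + s m') \<and>
     (\<forall>m \<in> source_alg G i. \<forall>c. s (\<lambda>g. c * m g) = (\<lambda>g. c * s m g)) \<and>
     (\<forall>u \<in> P. \<forall>v \<in> P. \<forall>m \<in> source_alg G i. s (bimod_act G u v m) = bimod_act G u v (s m))"

definition sinv :: "('g, 'b) monoid_scheme \<Rightarrow> ('g \<Rightarrow> 'k::field) \<Rightarrow> (('g \<Rightarrow> 'k) \<Rightarrow> ('g \<Rightarrow> 'k)) \<Rightarrow> 'g \<Rightarrow> ('g \<Rightarrow> 'k)" where
  "sinv G i s g = inv_into (source_alg G i) s (gbasis g)"

definition Qx :: "('g, 'b) monoid_scheme \<Rightarrow> 'g set \<Rightarrow> 'g \<Rightarrow> ('g \<times> 'g) set" where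
  "Qx G P x = {(a, inv\<^bsub>G\<^esub> x \<otimes>\<^bsub>G\<^esub> a \<otimes>\<^bsub>G\<^esub> x) | a.
                 a \<in> P \<and> inv\<^bsub>G\<^esub> x \<otimes>\<^bsub>G\<^esub> a \<otimes>\<^bsub>G\<^esub> x \<in> P}"

text \<open>Q_{u,v,x} = Delta P \<inter> (u,v)Q_x, with Delta P identified with P.\<close>
definition Quvx :: "('g, 'b) monoid_scheme \<Rightarrow> 'g set \<Rightarrow> 'g \<Rightarrow> 'g \<Rightarrow> 'g \<Rightarrow> 'g set" where
  "Quvx G P u v x = {w \<in> P. \<exists>(a, c) \<in> Qx G P x.
      w = u \<otimes>\<^bsub>G\<^esub> a \<otimes>\<^bsub>G\<^esub> inv\<^bsub>G\<^esub> u \<and> w = v \<otimes>\<^bsub>G\<^esub> c \<otimes>\<^bsub>G\<^esub> inv\<^bsub>G\<^esub> v}"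

text \<open>R is a system of representatives of Delta P \ (P x P) / Q_x.\<close>
definition Qx_reps :: "('g, 'b) monoid_scheme \<Rightarrow> 'g set \<Rightarrow> 'g \<Rightarrow> ('g \<times> 'g) set \<Rightarrow> bool" where
  "Qx_reps G P x R \<longleftrightarrow> R \<subseteq> P \<times> P \<and>
     (\<forall>a \<in> P. \<forall>c \<in> P. \<exists>!r. r \<in> R \<and> (\<exists>w \<in> P. \<exists>(q1, q2) \<in> Qx G P x.
         a = w \<otimes>\<^bsub>G\<^esub> fst r \<otimes>\<^bsub>G\<^esub> q1 \<and> c = w \<otimes>\<^bsub>G\<^esub> snd r \<otimes>\<^bsub>G\<^esub> q2))"

text \<open>An n-cochain on W with values in an abelian group is a function on lists of length n
  (entries in W). act is the action of W on the coefficients.\<close>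

definition gprod :: "('g, 'b) monoid_scheme \<Rightarrow> 'g list \<Rightarrow> 'g" where
  "gprod G ws = foldr (\<lambda>a c. a \<otimes>\<^bsub>G\<^esub> c) ws \<one>\<^bsub>G\<^esub>"

definition sgn_nat :: "nat \<Rightarrow> 'v::ab_group_add \<Rightarrow> 'v" where
  "sgn_nat j x = (if even j then x else - x)"

definition cobound :: "('g, 'b) monoid_scheme \<Rightarrow> ('g \<Rightarrow> 'v \<Rightarrow> 'v) \<Rightarrow> nat \<Rightarrow> ('g list \<Rightarrow> 'v::ab_group_add) \<Rightarrow> 'g list \<Rightarrow> 'v" where
  "cobound G act n f ws =
     act (ws ! 0) (f (drop 1 ws))
     + (\<Sum>j\<in>{1..n}. sgn_nat j (f (take (j - 1) ws @ [ws ! (j - 1) \<otimes>\<^bsub>G\<^esub> ws ! j] @ drop (j + 1) ws)))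
     + sgn_nat (n + 1) (f (take n ws))"

definition cochain_dom :: "'g set \<Rightarrow> nat \<Rightarrow> 'g list set" where
  "cochain_dom W n = {ws. length ws = n \<and> set ws \<subseteq> W}"

definition is_cocycle :: "('g, 'b) monoid_scheme \<Rightarrow> 'g set \<Rightarrow> ('g \<Rightarrow> 'v \<Rightarrow> 'v) \<Rightarrow> nat \<Rightarrow> ('g list \<Rightarrow> 'v::ab_group_add) \<Rightarrow> bool" where
  "is_cocycle G W act n f \<longleftrightarrow> (\<forall>ws \<in> cochain_dom W (n + 1). cobound G act n f ws = 0)"

definition is_coboundary :: "('g, 'b) monoid_scheme \<Rightarrow> 'g set \<Rightarrow> 'v set \<Rightarrow> ('g \<Rightarrow> 'v \<Rightarrow> 'v) \<Rightarrow> nat \<Rightarrow> ('g list \<Rightarrow> 'v::ab_group_add) \<Rightarrow> bool" where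
  "is_coboundary G W M act n c \<longleftrightarrow>
     (if n = 0 then (\<forall>ws \<in> cochain_dom W 0. c ws = 0)
      else (\<exists>h. (\<forall>ws \<in> cochain_dom W (n - 1). h ws \<in> M) \<and>
                (\<forall>ws \<in> cochain_dom W n. c ws = cobound G act (n - 1) h ws)))"

definition triv_act :: "'g \<Rightarrow> 'k \<Rightarrow> 'k" where
  "triv_act _ c = c"

definition conj_act :: "('g, 'b) monoid_scheme \<Rightarrow> 'g \<Rightarrow> ('g \<Rightarrow> 'k::field) \<Rightarrow> ('g \<Rightarrow> 'k)" where
  "conj_act G w m = bimod_act G w w m"

definition cup_k :: "nat \<Rightarrow> ('g list \<Rightarrow> 'k::field) \<Rightarrow> ('g list \<Rightarrow> 'k) \<Rightarrow> 'g list \<Rightarrow> 'k" where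
  "cup_k m f g ws = f (take m ws) * g (drop m ws)"

definition cup_A :: "('g, 'b) monoid_scheme \<Rightarrow> nat \<Rightarrow> ('g list \<Rightarrow> ('g \<Rightarrow> 'k::field)) \<Rightarrow> ('g list \<Rightarrow> ('g \<Rightarrow> 'k)) \<Rightarrow> 'g list \<Rightarrow> ('g \<Rightarrow> 'k)" where
  "cup_A G m f g ws = gmult G (f (take m ws)) (conj_act G (gprod G (take m ws)) (g (drop m ws)))"

text \<open>theta^*_{u,v,x} on cochains: induced by k \<rightarrow> ikGi, alpha maps to alpha s^{-1}(u x v^{-1}).\<close>
definition theta :: "('g, 'b) monoid_scheme \<Rightarrow> ('g \<Rightarrow> 'k::field) \<Rightarrow> (('g \<Rightarrow> 'k) \<Rightarrow> ('g \<Rightarrow> 'k))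
     \<Rightarrow> 'g \<Rightarrow> 'g \<Rightarrow> 'g \<Rightarrow> ('g list \<Rightarrow> 'k) \<Rightarrow> 'g list \<Rightarrow> ('g \<Rightarrow> 'k)" where
  "theta G i s u v x f ws = (\<lambda>h. f ws * sinv G i s (u \<otimes>\<^bsub>G\<^esub> x \<otimes>\<^bsub>G\<^esub> inv\<^bsub>G\<^esub> v) h)"

text \<open>Cup product on H^*(W,k) and H^*(W,ikGi) in total degree n, for graded families of cochains.\<close>
definition gcup_k :: "nat \<Rightarrow> (nat \<Rightarrow> 'g list \<Rightarrow> 'k::field) \<Rightarrow> (nat \<Rightarrow> 'g list \<Rightarrow> 'k) \<Rightarrow> 'g list \<Rightarrow> 'k" where
  "gcup_k n F H ws = (\<Sum>m\<le>n. cup_k m (F m) (H (n - m)) ws)"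

definition gcup_A :: "('g, 'b) monoid_scheme \<Rightarrow> nat \<Rightarrow> (nat \<Rightarrow> 'g list \<Rightarrow> ('g \<Rightarrow> 'k::field))
     \<Rightarrow> (nat \<Rightarrow> 'g list \<Rightarrow> ('g \<Rightarrow> 'k)) \<Rightarrow> 'g list \<Rightarrow> ('g \<Rightarrow> 'k)" where
  "gcup_A G n F H ws = (\<Sum>m\<le>n. cup_A G m (F m) (H (n - m)) ws)"

definition graded_class_k :: "('g, 'b) monoid_scheme \<Rightarrow> 'g set \<Rightarrow> (nat \<Rightarrow> 'g list \<Rightarrow> 'k::field) \<Rightarrow> bool" where
  "graded_class_k G W F \<longleftrightarrow> (\<forall>m. is_cocycle G W triv_act m (F m)) \<and>
     (\<exists>N. \<forall>m \<ge> N. \<forall>ws \<in> cochain_dom W m. F m ws = 0)"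

end

theory Submission
  imports Defs
begin

text \<open>Every element t of W' lies in Q_{wu_y,wv_y,y}, hence commutes with
  g = (w u_y) y (w v_y)^{-1}; since s commutes with the conjugation action of P, conjugation
  by t fixes s^{-1}(g). The cup product of the cochains a \<mapsto> f(a) X and b \<mapsto> g(b) Y
  sends (a,b) to f(a) g(b) X (t Y t^{-1}), t the product of the entries of a, so for
  Y = s^{-1}(g) it is the cochain f \<cup> g times XY. Expanding XY as the given linear
  combination shows that the two sides of the identity already agree as cochains, so their
  difference is the coboundary of 0.\<close>

lemma sum_fun_apply: "(\<Sum>a\<in>A. f a) h = (\<Sum>a\<in>A. f a h)"
  by (induction A rule: infinite_finite_induct) auto

lemma (in group) mult_inv_cancel_left [simp]:
  "x \<in> carrier G \<Longrightarrow> y \<in> carrier G \<Longrightarrow> x \<otimes> (inv x \<otimes> y) = y"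
  by (simp add: m_assoc[symmetric])

lemma (in group) inv_mult_cancel_left [simp]:
  "x \<in> carrier G \<Longrightarrow> y \<in> carrier G \<Longrightarrow> inv x \<otimes> (x \<otimes> y) = y"
  by (simp add: m_assoc[symmetric])

lemma gmult_scale_left: "gmult G (\<lambda>h. c * X h) Y = (\<lambda>h. c * gmult G X Y h)"
  by (rule ext) (simp add: gmult_def sum_distrib_left mult_ac)

lemma gmult_scale_right: "gmult G X (\<lambda>h. c * Y h) = (\<lambda>h. c * gmult G X Y h)"
  by (rule ext) (simp add: gmult_def sum_distrib_left mult_ac)

lemma gmult_zero_left: "gmult G 0 Y = 0"
  by (rule ext) (simp add: gmult_def)

lemma gmult_zero_right: "gmult G X 0 = 0"
  by (rule ext) (simp add: gmult_def)

lemma zero_in_source_alg: "0 \<in> source_alg G i"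
proof -
  have "gmult G (gmult G i 0) i = 0"
    by (rule ext) (simp add: gmult_def)
  moreover have "0 \<in> galg G" by (simp add: galg_def)
  ultimately show ?thesis unfolding source_alg_def by force
qed

lemma conj_act_zero: "conj_act G t 0 = 0"
  by (simp add: conj_act_def bimod_act_def gmult_zero_left gmult_zero_right)

lemma conj_act_scale: "conj_act G t (\<lambda>h. c * Y h) = (\<lambda>h. c * conj_act G t Y h)"
  by (simp add: conj_act_def bimod_act_def gmult_scale_left gmult_scale_right)

lemma gmult_gbasis_left:
  fixes G (structure)
  assumes "group G" "finite (carrier G)" "u \<in> carrier G"
  shows "gmult G (gbasis u) X = (\<lambda>g. if g \<in> carrier G then X (inv u \<otimes> g) else 0)"
proof (rule ext)
  fix g
  have "(\<Sum>h\<in>carrier G. gbasis u h * X (inv h \<otimes> g))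
      = (\<Sum>h\<in>carrier G. if h = u then X (inv h \<otimes> g) else 0)"
    by (rule sum.cong) (auto simp: gbasis_def)
  also have "\<dots> = X (inv u \<otimes> g)" using assms by (simp add: sum.delta')
  finally show "gmult G (gbasis u) X g = (if g \<in> carrier G then X (inv u \<otimes> g) else 0)"
    by (simp add: gmult_def)
qed

lemma gmult_gbasis_right:
  fixes G (structure)
  assumes "group G" "finite (carrier G)" "v \<in> carrier G"
  shows "gmult G X (gbasis v) = (\<lambda>g. if g \<in> carrier G then X (g \<otimes> inv v) else 0)"
proof (rule ext)
  interpret group G by fact
  fix g
  show "gmult G X (gbasis v) g = (if g \<in> carrier G then X (g \<otimes> inv v) else 0)"
  proof (cases "g \<in> carrier G")
    case True
    have "(\<Sum>h\<in>carrier G. X h * gbasis v (inv h \<otimes> g))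
        = (\<Sum>h\<in>carrier G. if h = g \<otimes> inv v then X h else 0)"
    proof (rule sum.cong[OF refl])
      fix h assume "h \<in> carrier G"
      then have "inv h \<otimes> g = v \<longleftrightarrow> h = g \<otimes> inv v"
        using True assms(3) by (metis inv_closed inv_inv m_assoc m_closed r_inv r_one l_inv l_one)
      then show "X h * gbasis v (inv h \<otimes> g) = (if h = g \<otimes> inv v then X h else 0)"
        by (auto simp: gbasis_def)
    qed
    also have "\<dots> = X (g \<otimes> inv v)" using True assms by (simp add: sum.delta')
    finally show ?thesis using True by (simp add: gmult_def)
  qed (simp add: gmult_def)
qed

text \<open>Conjugation on kG written out pointwise: in this form it is visibly multiplicative,
  which the definition of bimod_act through gmult would only show via associativity.\<close>

definition gconj :: "('g, 'b) monoid_scheme \<Rightarrow> 'g \<Rightarrow> ('g \<Rightarrow> 'k::field) \<Rightarrow> ('g \<Rightarrow> 'k)" where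
  "gconj G t X = (\<lambda>g. if g \<in> carrier G then X (inv\<^bsub>G\<^esub> t \<otimes>\<^bsub>G\<^esub> g \<otimes>\<^bsub>G\<^esub> t) else 0)"

lemma gconj_galg: "gconj G t X \<in> galg G"
  by (simp add: gconj_def galg_def)

lemma bimod_act_diag_eq_gconj:
  fixes G (structure)
  assumes "group G" "finite (carrier G)" "t \<in> carrier G"
  shows "bimod_act G t t X = gconj G t X"
proof -
  interpret group G by fact
  show ?thesis
    unfolding bimod_act_def gconj_def
    using assms by (auto simp: gmult_gbasis_left gmult_gbasis_right m_assoc)
qed

lemma gconj_gmult:
  fixes G (structure)
  assumes "group G" "t \<in> carrier G"
  shows "gconj G t (gmult G X Y) = gmult G (gconj G t X) (gconj G t Y)"
proof (rule ext)
  interpret group G by fact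
  fix g
  let ?c = "\<lambda>h. inv t \<otimes> h \<otimes> t"
  show "gconj G t (gmult G X Y) g = gmult G (gconj G t X) (gconj G t Y) g"
  proof (cases "g \<in> carrier G")
    case True
    have bij: "bij_betw ?c (carrier G) (carrier G)"
      by (rule bij_betwI[where g = "\<lambda>h. t \<otimes> h \<otimes> inv t"])
        (use assms(2) in \<open>auto simp: m_assoc[symmetric], auto simp: m_assoc\<close>)
    have "gmult G (gconj G t X) (gconj G t Y) g
        = (\<Sum>h\<in>carrier G. X (?c h) * Y (inv (?c h) \<otimes> ?c g))"
      unfolding gmult_def gconj_def using True assms(2)
      by (auto intro!: sum.cong simp: inv_mult_group m_assoc)
    also have "\<dots> = (\<Sum>h\<in>carrier G. X h * Y (inv h \<otimes> ?c g))"
      using sum.reindex_bij_betw[OF bij, of "\<lambda>h. X h * Y (inv h \<otimes> ?c g)"] by simp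
    also have "\<dots> = gconj G t (gmult G X Y) g"
      unfolding gmult_def gconj_def using True assms(2) by simp
    finally show ?thesis by simp
  qed (simp add: gmult_def gconj_def)
qed

lemma gconj_gbasis:
  fixes G (structure)
  assumes "group G" "t \<in> carrier G" "g \<in> carrier G"
  shows "gconj G t (gbasis g) = gbasis (t \<otimes> g \<otimes> inv t)"
proof (rule ext)
  interpret group G by fact
  fix h
  have "inv t \<otimes> h \<otimes> t = g \<longleftrightarrow> h = t \<otimes> g \<otimes> inv t" if "h \<in> carrier G"
    using that assms(2,3) by (auto simp: m_assoc)
  then show "gconj G t (gbasis g) h = gbasis (t \<otimes> g \<otimes> inv t) h"
    using assms(2,3) by (auto simp: gconj_def gbasis_def)
qed

lemma gconj_fixed_if_commutes:
  fixes G (structure)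
  assumes "group G" "finite (carrier G)" "t \<in> carrier G"
    and "X \<in> galg G" and "gmult G (gbasis t) X = gmult G X (gbasis t)"
  shows "gconj G t X = X"
proof (rule ext)
  interpret group G by fact
  fix g
  show "gconj G t X g = X g"
  proof (cases "g \<in> carrier G")
    case True
    have "gmult G (gbasis t) X (g \<otimes> t) = gmult G X (gbasis t) (g \<otimes> t)"
      using assms(5) by simp
    then have "X (inv t \<otimes> (g \<otimes> t)) = X (g \<otimes> t \<otimes> inv t)"
      using True assms(1-3) by (simp add: gmult_gbasis_left gmult_gbasis_right)
    then show ?thesis using True assms(3) by (simp add: gconj_def m_assoc)
  qed (use assms(4) in \<open>simp add: gconj_def galg_def\<close>)
qed

lemma bimod_act_diag_source_alg:
  fixes G (structure)
  assumes "group G" "finite (carrier G)" "P \<subseteq> carrier G" "i \<in> gfix G P"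
    and "t \<in> P" "m \<in> source_alg G i"
  shows "bimod_act G t t m \<in> source_alg G i"
proof -
  have t: "t \<in> carrier G" using assms(3,5) by auto
  obtain a where "a \<in> galg G" and m: "m = gmult G (gmult G i a) i"
    using assms(6) by (auto simp: source_alg_def)
  have "gconj G t i = i"
    using assms(4,5) by (intro gconj_fixed_if_commutes[OF assms(1,2) t]) (auto simp: gfix_def)
  then have "bimod_act G t t m = gmult G (gmult G i (gconj G t a)) i"
    unfolding m bimod_act_diag_eq_gconj[OF assms(1,2) t] by (simp add: gconj_gmult[OF assms(1) t])
  then show ?thesis unfolding source_alg_def by (blast intro: gconj_galg)
qed

lemma gbasis_in_perm_mod: "g \<in> dcoset G P y \<Longrightarrow> y \<in> Y \<Longrightarrow> gbasis g \<in> perm_mod G P Y"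
  by (auto simp: perm_mod_def gbasis_def split: if_splits)

lemma conj_act_sinv_fixed:
  fixes G (structure) and i :: "'g \<Rightarrow> 'k::field"
  assumes "group G" "finite (carrier G)" "P \<subseteq> carrier G" "i \<in> gfix G P"
    and "source_iso G P i Y s"
    and "t \<in> P" "g \<in> carrier G" "(gbasis g :: 'g \<Rightarrow> 'k) \<in> perm_mod G P Y" "t \<otimes> g = g \<otimes> t"
  shows "conj_act G t (sinv G i s g) = sinv G i s g"
proof -
  interpret group G by fact
  have t: "t \<in> carrier G" using assms(3,6) by auto
  have bij: "bij_betw s (source_alg G i) (perm_mod G P Y)"
    using assms(5) by (simp add: source_iso_def)
  then have img: "gbasis g \<in> s ` source_alg G i" using assms(8) by (simp add: bij_betw_def)
  define m where "m = sinv G i s g"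
  have m: "m \<in> source_alg G i" unfolding m_def sinv_def using img by (rule inv_into_into)
  have sm: "s m = gbasis g" unfolding m_def sinv_def using img by (rule f_inv_into_f)
  have tm: "bimod_act G t t m \<in> source_alg G i"
    by (rule bimod_act_diag_source_alg[OF assms(1-4,6) m])
  have "s (bimod_act G t t m) = bimod_act G t t (s m)"
    using assms(5,6) m by (simp add: source_iso_def)
  also have "\<dots> = gbasis (t \<otimes> g \<otimes> inv t)"
    unfolding bimod_act_diag_eq_gconj[OF assms(1,2) t] sm by (rule gconj_gbasis[OF assms(1) t assms(7)])
  also have "t \<otimes> g \<otimes> inv t = g"
    using assms(7,9) t by (simp add: m_assoc)
  finally have "s (bimod_act G t t m) = s m" using sm by simp
  then have "bimod_act G t t m = m"
    using bij tm m by (auto simp: bij_betw_def inj_on_def)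
  then show ?thesis by (simp add: conj_act_def m_def)
qed

lemma Quvx_commutes:
  fixes G (structure)
  assumes "group G" "P \<subseteq> carrier G" "u \<in> carrier G" "v \<in> carrier G" "x \<in> carrier G"
    and "t \<in> Quvx G P u v x"
  shows "t \<otimes> (u \<otimes> x \<otimes> inv v) = (u \<otimes> x \<otimes> inv v) \<otimes> t"
proof -
  interpret group G by fact
  obtain a where a: "a \<in> P" and "inv x \<otimes> a \<otimes> x \<in> P"
    and t_u: "t = u \<otimes> a \<otimes> inv u" and t_v: "t = v \<otimes> (inv x \<otimes> a \<otimes> x) \<otimes> inv v"
    using assms(6) unfolding Quvx_def Qx_def by blast
  have ac: "a \<in> carrier G" using a assms(2) by auto
  have "t \<otimes> (u \<otimes> x \<otimes> inv v) = u \<otimes> a \<otimes> x \<otimes> inv v"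
    unfolding t_u using ac assms(3-5) by (simp add: m_assoc)
  also have "\<dots> = (u \<otimes> x \<otimes> inv v) \<otimes> t"
    unfolding t_v using ac assms(3-5) by (simp add: m_assoc)
  finally show ?thesis .
qed

lemma gprod_centralizes:
  fixes G (structure)
  assumes "group G" "subgroup P G" "g \<in> carrier G"
    and "\<And>t. t \<in> W \<Longrightarrow> t \<in> P \<and> t \<otimes> g = g \<otimes> t"
    and "set ws \<subseteq> W"
  shows "gprod G ws \<in> P \<and> gprod G ws \<otimes> g = g \<otimes> gprod G ws"
proof -
  interpret group G by fact
  have PG: "P \<subseteq> carrier G" using assms(2) by (rule subgroup.subset)
  show ?thesis
    using assms(5)
  proof (induction ws)
    case Nil
    show ?case using assms(2,3) by (simp add: gprod_def subgroup.one_closed)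
  next
    case (Cons a ws)
    have a: "a \<in> P" "a \<otimes> g = g \<otimes> a" using Cons.prems assms(4) by auto
    have ws: "gprod G ws \<in> P" "gprod G ws \<otimes> g = g \<otimes> gprod G ws" using Cons by auto
    have car: "a \<in> carrier G" "gprod G ws \<in> carrier G" using a(1) ws(1) PG by auto
    have "a \<otimes> gprod G ws \<otimes> g = a \<otimes> g \<otimes> gprod G ws"
      using ws(2) car assms(3) by (simp add: m_assoc)
    also have "\<dots> = g \<otimes> (a \<otimes> gprod G ws)"
      using a(2) car assms(3) by (simp add: m_assoc)
    finally show ?case using a ws assms(2) by (simp add: gprod_def subgroup.m_closed)
  qed
qed

lemma gcup_A_scaled_cochains:
  assumes "\<And>m. m \<le> n \<Longrightarrow> conj_act G (gprod G (take m ws)) Y = Y"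
  shows "gcup_A G n (\<lambda>m ws h. F m ws * X h) (\<lambda>m ws h. H m ws * Y h) ws
       = (\<lambda>h. gcup_k n F H ws * gmult G X Y h)"
proof -
  have "cup_A G m (\<lambda>ws h. F m ws * X h) (\<lambda>ws h. H (n - m) ws * Y h) ws
      = (\<lambda>h. cup_k m (F m) (H (n - m)) ws * gmult G X Y h)" if "m \<le> n" for m
    unfolding cup_A_def cup_k_def
    by (simp only: conj_act_scale assms[OF that] gmult_scale_left gmult_scale_right) (simp add: mult_ac)
  then have "gcup_A G n (\<lambda>m ws h. F m ws * X h) (\<lambda>m ws h. H m ws * Y h) ws
      = (\<Sum>m\<le>n. (\<lambda>h. cup_k m (F m) (H (n - m)) ws * gmult G X Y h))"
    unfolding gcup_A_def by (intro sum.cong) auto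
  then show ?thesis
    by (simp add: fun_eq_iff gcup_k_def sum_fun_apply sum_distrib_right)
qed

lemma sum_theta_eq_scaled:
  "(\<Sum>z\<in>Z. \<Sum>(u', v')\<in>A z. (\<lambda>h. \<alpha> z * theta G i s u' v' z f ws h))
   = (\<lambda>h. f ws * (\<Sum>z\<in>Z. \<Sum>(u', v')\<in>A z.
                   (\<lambda>h. \<alpha> z * sinv G i s (u' \<otimes>\<^bsub>G\<^esub> z \<otimes>\<^bsub>G\<^esub> inv\<^bsub>G\<^esub> v') h)) h)"
  by (rule ext) (simp add: theta_def sum_fun_apply split_def sum_distrib_left mult_ac)

lemma is_coboundary_if_vanishes:
  assumes "0 \<in> M" "\<And>t. act t 0 = 0" "\<And>ws. ws \<in> cochain_dom W n \<Longrightarrow> c ws = 0"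
  shows "is_coboundary G W M act n c"
proof -
  have "sgn_nat j 0 = (0 :: 'a::ab_group_add)" for j by (simp add: sgn_nat_def)
  then show ?thesis
    unfolding is_coboundary_def using assms
    by (auto intro!: exI[of _ "\<lambda>_. 0"] simp: cobound_def)
qed

lemma gcup_A_theta:
  fixes G (structure) and i :: "'g \<Rightarrow> 'k::field"
  assumes "group G" "finite (carrier G)" "subgroup P G" "i \<in> gfix G P" "source_iso G P i Y s"
    and "y \<in> Y" "y \<in> carrier G" "u \<in> P" "v \<in> P" "set ws \<subseteq> Quvx G P u v y"
  shows "gcup_A G n (\<lambda>m. theta G i s u' v' x (F m)) (\<lambda>m. theta G i s u v y (H m)) ws
       = (\<lambda>h. gcup_k n F H ws
               * gmult G (sinv G i s (u' \<otimes> x \<otimes> inv v')) (sinv G i s (u \<otimes> y \<otimes> inv v)) h)"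
proof -
  interpret group G by fact
  define g where "g = u \<otimes> y \<otimes> inv v"
  have PG: "P \<subseteq> carrier G" using assms(3) by (rule subgroup.subset)
  have uv: "u \<in> carrier G" "v \<in> carrier G" using assms(8,9) PG by auto
  have g: "g \<in> carrier G" unfolding g_def using uv assms(7) by simp
  have "g \<in> dcoset G P y"
    unfolding g_def dcoset_def using assms(3,8,9) by (blast intro: subgroup.m_inv_closed)
  then have g_perm: "(gbasis g :: 'g \<Rightarrow> 'k) \<in> perm_mod G P Y"
    using assms(6) by (rule gbasis_in_perm_mod)
  have centralizes: "t \<in> P \<and> t \<otimes> g = g \<otimes> t" if "t \<in> Quvx G P u v y" for t
    using that Quvx_commutes[OF assms(1) PG uv assms(7)] unfolding g_def by (auto simp: Quvx_def)
  have "conj_act G (gprod G (take m ws)) (sinv G i s g) = sinv G i s g" for m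
    using gprod_centralizes[OF assms(1,3) g centralizes, where ws = "take m ws"] assms(10)
    by (intro conj_act_sinv_fixed[OF assms(1,2) PG assms(4,5) _ g g_perm])
      (auto dest: in_set_takeD)
  then show ?thesis
    unfolding theta_def g_def by (rule gcup_A_scaled_cochains)
qed

theorem lemma4p8:
  fixes G :: "('g, 'b) monoid_scheme" and p :: nat
    and b i :: "'g \<Rightarrow> 'k::field" and P Y :: "'g set"
    and s :: "('g \<Rightarrow> 'k) \<Rightarrow> ('g \<Rightarrow> 'k)"
    and R :: "'g \<Rightarrow> ('g \<times> 'g) set"
    and x y ux vx uy vy w :: 'g
    and Z :: "'g set" and A :: "'g \<Rightarrow> ('g \<times> 'g) set" and \<alpha> :: "'g \<Rightarrow> 'k"
    and F H :: "nat \<Rightarrow> 'g list \<Rightarrow> 'k"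
  assumes "group G" and "finite (carrier G)"
    and "alg_closed TYPE('k)" and "prime p" and "CHAR('k) = p"
    and "block_idem G b"
    and "source_idem p G b P i"
    and "dcoset_reps_subset G P Y"
    and "source_iso G P i Y s"
    and "\<forall>t \<in> Y. Qx_reps G P t (R t)"
    and "x \<in> Y" and "y \<in> Y"
    and "(ux, vx) \<in> R x" and "(uy, vy) \<in> R y"
    and "w \<in> P"
    and "Z \<subseteq> Y" and "finite Z" and "\<forall>z \<in> Z. A z \<subseteq> P \<times> P"
    and "gmult G (sinv G i s (ux \<otimes>\<^bsub>G\<^esub> x \<otimes>\<^bsub>G\<^esub> inv\<^bsub>G\<^esub> vx))
                 (sinv G i s (w \<otimes>\<^bsub>G\<^esub> uy \<otimes>\<^bsub>G\<^esub> y \<otimes>\<^bsub>G\<^esub> inv\<^bsub>G\<^esub> vy \<otimes>\<^bsub>G\<^esub> inv\<^bsub>G\<^esub> w))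
         = (\<Sum>z\<in>Z. \<Sum>(u', v')\<in>A z. (\<lambda>h. \<alpha> z * sinv G i s (u' \<otimes>\<^bsub>G\<^esub> z \<otimes>\<^bsub>G\<^esub> inv\<^bsub>G\<^esub> v') h))"
    and "graded_class_k G (Quvx G P ux vx x \<inter> Quvx G P (w \<otimes>\<^bsub>G\<^esub> uy) (w \<otimes>\<^bsub>G\<^esub> vy) y) F"
    and "graded_class_k G (Quvx G P ux vx x \<inter> Quvx G P (w \<otimes>\<^bsub>G\<^esub> uy) (w \<otimes>\<^bsub>G\<^esub> vy) y) H"
  shows "\<forall>n. is_coboundary G (Quvx G P ux vx x \<inter> Quvx G P (w \<otimes>\<^bsub>G\<^esub> uy) (w \<otimes>\<^bsub>G\<^esub> vy) y)
            (source_alg G i) (conj_act G) n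
            (\<lambda>ws. gcup_A G n (\<lambda>m. theta G i s ux vx x (F m))
                              (\<lambda>m. theta G i s (w \<otimes>\<^bsub>G\<^esub> uy) (w \<otimes>\<^bsub>G\<^esub> vy) y (H m)) ws
                - (\<Sum>z\<in>Z. \<Sum>(u', v')\<in>A z.
                     (\<lambda>h. \<alpha> z * theta G i s u' v' z (gcup_k n F H) ws h)))"
proof (intro allI is_coboundary_if_vanishes zero_in_source_alg conj_act_zero)
  interpret group G by fact
  have P: "subgroup P G" and i: "i \<in> gfix G P"
    using assms(7) by (auto simp: source_idem_def defect_group_def p_subgroup_def prim_idem_def)
  have "uy \<in> P" "vy \<in> P" using assms(10,12,14) by (auto simp: Qx_reps_def)
  then have uy: "w \<otimes>\<^bsub>G\<^esub> uy \<in> P" "w \<otimes>\<^bsub>G\<^esub> vy \<in> P"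
    and car: "w \<in> carrier G" "uy \<in> carrier G" "vy \<in> carrier G"
    using assms(15) P subgroup.subset[OF P] by (auto intro: subgroup.m_closed)
  have y: "y \<in> carrier G" using assms(8,12) by (auto simp: dcoset_reps_subset_def)
  have g_eq: "w \<otimes>\<^bsub>G\<^esub> uy \<otimes>\<^bsub>G\<^esub> y \<otimes>\<^bsub>G\<^esub> inv\<^bsub>G\<^esub> (w \<otimes>\<^bsub>G\<^esub> vy)
      = w \<otimes>\<^bsub>G\<^esub> uy \<otimes>\<^bsub>G\<^esub> y \<otimes>\<^bsub>G\<^esub> inv\<^bsub>G\<^esub> vy \<otimes>\<^bsub>G\<^esub> inv\<^bsub>G\<^esub> w"
    using car y by (simp add: inv_mult_group m_assoc)
  fix n ws
  assume "ws \<in> cochain_dom (Quvx G P ux vx x \<inter> Quvx G P (w \<otimes>\<^bsub>G\<^esub> uy) (w \<otimes>\<^bsub>G\<^esub> vy) y) n"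
  then have "set ws \<subseteq> Quvx G P (w \<otimes>\<^bsub>G\<^esub> uy) (w \<otimes>\<^bsub>G\<^esub> vy) y"
    by (auto simp: cochain_dom_def)
  from gcup_A_theta[OF assms(1,2) P i assms(9,12) y uy this]
  show "gcup_A G n (\<lambda>m. theta G i s ux vx x (F m))
          (\<lambda>m. theta G i s (w \<otimes>\<^bsub>G\<^esub> uy) (w \<otimes>\<^bsub>G\<^esub> vy) y (H m)) ws
      - (\<Sum>z\<in>Z. \<Sum>(u', v')\<in>A z. (\<lambda>h. \<alpha> z * theta G i s u' v' z (gcup_k n F H) ws h)) = 0"
    by (simp add: g_eq assms(19) sum_theta_eq_scaled)
qed

end
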